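(* Let $M$ be a matroid on $E=\{1,\dots,n\}$ such that $E$ admits a good partition $(E_1,E_2)$ with respect to $M$, and let $M'$ be a relaxation of $M$. Then $P(M')$ has a nontrivial hyperplane split.
   Context: A relaxation of $M$ is the matroid $M'$ on $E$ with $\mathcal{B}(M')=\mathcal{B}(M)\cup\{X\}$, where $X\subseteq E$ is a set that is both a circuit and a hyperplane (closed set of rank $r-1$) of $M$, $r$ the rank of $M$. For a matroid $N$ on $E$, $P(N)=\mathrm{conv}\{\sum_{i\in B}e_i : B\in\mathcal{B}(N)\}\subset\mathbb{R}^n$. A hyperplane split of $P(N)$ is an expression $P(N)=P(N_1)\cup P(N_2)$ with $N_1,N_2$ matroids on $E$ such that $P(N_1)\cap P(N_2)$ is a face of both; it is nontrivial if $P(N_1)\neq P(N)\neq P(N_2)$. For $A\subseteq E$, $M|_A$ is the restriction, $\mathcal{I}(\cdot)$ the independent sets. A partition $(E_1,E_2)$ of $E$ with $r_i$ the rank of $M|_{E_i}$ and $r_i>1$ is a good partition if there exist integers $0<a_1<r_1$, $0<a_2<r_2$ with (P1) $r_1+r_2=r+a_1+a_2$ and (P2) for every $X\in\mathcal{I}(M|_{E_1})$ with $|X|\le r_1-a_1$ and every $Y\in\mathcal{I}(M|_{E_2})$ with $|Y|\le r_2-a_2$, $X\cup Y\in\mathcal{I}(M)$. *)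

theory Defs
  imports "HOL-Analysis.Analysis"
begin

text \<open>A matroid on the ground set E is represented by its family of bases.\<close>
definition matroid_bases :: "'a set \<Rightarrow> 'a set set \<Rightarrow> bool" where
  "matroid_bases E \<B> \<longleftrightarrow> finite E \<and> \<B> \<noteq> {} \<and> (\<forall>b\<in>\<B>. b \<subseteq> E) \<and>
     (\<forall>B1\<in>\<B>. \<forall>B2\<in>\<B>. \<forall>x\<in>B1 - B2. \<exists>y\<in>B2 - B1. insert y (B1 - {x}) \<in> \<B>)"

definition m_indep :: "'a set set \<Rightarrow> 'a set \<Rightarrow> bool" where
  "m_indep \<B> I \<longleftrightarrow> (\<exists>b\<in>\<B>. I \<subseteq> b)"

definition m_rank :: "'a set set \<Rightarrow> 'a set \<Rightarrow> nat" where
  "m_rank \<B> A = Max {card I | I. m_indep \<B> I \<and> I \<subseteq> A}"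

definition m_circuit :: "'a set \<Rightarrow> 'a set set \<Rightarrow> 'a set \<Rightarrow> bool" where
  "m_circuit E \<B> C \<longleftrightarrow> C \<subseteq> E \<and> \<not> m_indep \<B> C \<and> (\<forall>D. D \<subset> C \<longrightarrow> m_indep \<B> D)"

definition m_closure :: "'a set \<Rightarrow> 'a set set \<Rightarrow> 'a set \<Rightarrow> 'a set" where
  "m_closure E \<B> F = {e\<in>E. m_rank \<B> (insert e F) = m_rank \<B> F}"

definition m_hyperplane :: "'a set \<Rightarrow> 'a set set \<Rightarrow> 'a set \<Rightarrow> bool" where
  "m_hyperplane E \<B> F \<longleftrightarrow> F \<subseteq> E \<and> m_closure E \<B> F = F \<and> m_rank \<B> F = m_rank \<B> E - 1"

definition is_relaxation :: "'a set \<Rightarrow> 'a set set \<Rightarrow> 'a set set \<Rightarrow> bool" where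
  "is_relaxation E \<B> \<B>' \<longleftrightarrow> (\<exists>X. m_circuit E \<B> X \<and> m_hyperplane E \<B> X \<and> \<B>' = \<B> \<union> {X})"

definition restr_indep :: "'a set set \<Rightarrow> 'a set \<Rightarrow> 'a set \<Rightarrow> bool" where
  "restr_indep \<B> A I \<longleftrightarrow> m_indep \<B> I \<and> I \<subseteq> A"

definition good_partition :: "'a set \<Rightarrow> 'a set set \<Rightarrow> 'a set \<Rightarrow> 'a set \<Rightarrow> bool" where
  "good_partition E \<B> E1 E2 \<longleftrightarrow>
     E1 \<union> E2 = E \<and> E1 \<inter> E2 = {} \<and>
     m_rank \<B> E1 > 1 \<and> m_rank \<B> E2 > 1 \<and>
     (\<exists>a1 a2::nat. 0 < a1 \<and> a1 < m_rank \<B> E1 \<and> 0 < a2 \<and> a2 < m_rank \<B> E2 \<and>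
        m_rank \<B> E1 + m_rank \<B> E2 = m_rank \<B> E + a1 + a2 \<and>
        (\<forall>X Y. restr_indep \<B> E1 X \<and> card X \<le> m_rank \<B> E1 - a1 \<and>
               restr_indep \<B> E2 Y \<and> card Y \<le> m_rank \<B> E2 - a2 \<longrightarrow> m_indep \<B> (X \<union> Y)))"

text \<open>Matroid base polytope, ground set = the finite type 'n, ambient space real^'n.\<close>
definition indic_vec :: "'n::finite set \<Rightarrow> real^'n" where
  "indic_vec B = (\<chi> i. if i \<in> B then 1 else 0)"

definition base_polytope :: "'n::finite set set \<Rightarrow> (real^'n) set" where
  "base_polytope \<B> = convex hull (indic_vec ` \<B>)"

definition hyperplane_split :: "'n::finite set set \<Rightarrow> 'n set set \<Rightarrow> 'n set set \<Rightarrow> bool" where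
  "hyperplane_split \<B> \<B>1 \<B>2 \<longleftrightarrow>
     matroid_bases UNIV \<B>1 \<and> matroid_bases UNIV \<B>2 \<and>
     base_polytope \<B> = base_polytope \<B>1 \<union> base_polytope \<B>2 \<and>
     (base_polytope \<B>1 \<inter> base_polytope \<B>2) face_of base_polytope \<B>1 \<and>
     (base_polytope \<B>1 \<inter> base_polytope \<B>2) face_of base_polytope \<B>2"

definition has_nontrivial_hyperplane_split :: "'n::finite set set \<Rightarrow> bool" where
  "has_nontrivial_hyperplane_split \<B> \<longleftrightarrow>
     (\<exists>\<B>1 \<B>2. hyperplane_split \<B> \<B>1 \<B>2 \<and>
        base_polytope \<B>1 \<noteq> base_polytope \<B> \<and> base_polytope \<B>2 \<noteq> base_polytope \<B>)"

end

theory Submission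
  imports Defs
begin

text \<open>
  Let X be the circuit-hyperplane at which M is relaxed to M', let r be
  the rank and let (E1, E2) be a good partition with parameters a1, a2.  Put
  k_i = r_i - a_i, so that k1 + k2 = r by (P1).  Independent k_i-subsets of M' are
  smaller than r and hence independent in M, so by (P2) any independent k1-subset of
  E1 together with any independent k2-subset of E2 is a base of M'; we call this the
  layer condition.  The layer condition alone produces the split: the hyperplane
  "k1 elements in E1" cuts P(M') into the polytopes of the bases with at most k1
  elements in E1 and of the bases with at most k2 elements in E2.  Both families are
  matroids, their polytopes meet in a common face, and both are proper because
  rank(E_i) > k_i provides bases beyond the hyperplane on either side.
\<close>

lemma base_indep: "B \<in> Bs \<Longrightarrow> m_indep Bs B"
  unfolding m_indep_def by blast

lemma indep_subset: "m_indep Bs I \<Longrightarrow> J \<subseteq> I \<Longrightarrow> m_indep Bs J"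
  unfolding m_indep_def by blast

lemma empty_indep: "matroid_bases UNIV Bs \<Longrightarrow> m_indep Bs {}"
  unfolding matroid_bases_def m_indep_def by auto

text \<open>All bases have the same size: an exchange step from B1 towards B2 keeps the size
  and strictly shrinks B1 - B2.\<close>
lemma bases_card_eq:
  fixes Bs :: "'n::finite set set"
  assumes M: "matroid_bases UNIV Bs" and B1: "B1 \<in> Bs" and B2: "B2 \<in> Bs"
  shows "card B1 = card B2"
  using B1
proof (induction "card (B1 - B2)" arbitrary: B1 rule: less_induct)
  case (less B1)
  show ?case
  proof (cases "B1 - B2 = {}")
    case True
    have "B2 - B1 = {}"
    proof (rule ccontr)
      assume "B2 - B1 \<noteq> {}"
      then obtain x where "x \<in> B2 - B1" by blast
      then show False
        using M B2 less.prems True unfolding matroid_bases_def by blast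
    qed
    with True show ?thesis by (metis Diff_eq_empty_iff subset_antisym)
  next
    case False
    then obtain x where x: "x \<in> B1 - B2" by blast
    then obtain y where y: "y \<in> B2 - B1" and B1': "insert y (B1 - {x}) \<in> Bs"
      using M B2 less.prems unfolding matroid_bases_def by blast
    have "insert y (B1 - {x}) - B2 = (B1 - B2) - {x}" using y by auto
    then have "card (insert y (B1 - {x}) - B2) < card (B1 - B2)"
      by (metis card_Diff1_less finite x)
    then have "card (insert y (B1 - {x})) = card B2" using less.hyps B1' by blast
    moreover have "card (insert y (B1 - {x})) = card B1"
      using x y card_Suc_Diff1[of B1 x] by (simp add: card_insert_if)
    ultimately show ?thesis by simp
  qed
qed

text \<open>Take bases
  B \<supseteq> I and B' \<supseteq> J with card (B - B') minimal.  Minimality gives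
  B - I \<subseteq> B' and B' - J \<subseteq> B; if no element of J - I could be added to I,
  then B' - B = J - I while B - B' \<subseteq> I - J, contradicting card I < card J.\<close>
lemma augment:
  fixes Bs :: "'n::finite set set"
  assumes M: "matroid_bases UNIV Bs" and I: "m_indep Bs I" and J: "m_indep Bs J"
    and lt: "card I < card J"
  shows "\<exists>e\<in>J - I. m_indep Bs (insert e I)"
proof (rule ccontr)
  assume no: "\<not> ?thesis"
  define P where "P = (\<lambda>p. fst p \<in> Bs \<and> I \<subseteq> fst p \<and> snd p \<in> Bs \<and> J \<subseteq> snd p)"
  define f where "f = (\<lambda>p::'n set \<times> 'n set. card (fst p - snd p))"
  obtain BI BJ where "BI \<in> Bs" "I \<subseteq> BI" "BJ \<in> Bs" "J \<subseteq> BJ" using I J unfolding m_indep_def by blast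
  then have "P (BI, BJ)" unfolding P_def by simp
  define p where "p = arg_min f P"
  have Pp: "P p" unfolding p_def by (rule arg_min_natI) fact
  have minp: "\<And>q. P q \<Longrightarrow> f p \<le> f q" unfolding p_def by (rule arg_min_nat_le)
  obtain B B' where p: "p = (B, B')" by (cases p)
  have B: "B \<in> Bs" "I \<subseteq> B" and B': "B' \<in> Bs" "J \<subseteq> B'" using Pp p unfolding P_def by auto
  have BI_sub: "B - I \<subseteq> B'"
  proof
    fix x assume x: "x \<in> B - I"
    show "x \<in> B'"
    proof (rule ccontr)
      assume "x \<notin> B'"
      then obtain y where y: "y \<in> B' - B" and C: "insert y (B - {x}) \<in> Bs"
        using M B B' x unfolding matroid_bases_def by blast
      have "P (insert y (B - {x}), B')" using C B B' x unfolding P_def by auto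
      then have "f p \<le> card (insert y (B - {x}) - B')" using minp unfolding f_def by fastforce
      moreover have "insert y (B - {x}) - B' = (B - B') - {x}" using y by auto
      moreover have "card ((B - B') - {x}) < card (B - B')" using x \<open>x \<notin> B'\<close>
        by (intro card_Diff1_less) auto
      ultimately show False unfolding f_def p by simp
    qed
  qed
  have BJ_sub: "B' - J \<subseteq> B"
  proof
    fix x assume x: "x \<in> B' - J"
    show "x \<in> B"
    proof (rule ccontr)
      assume "x \<notin> B"
      then obtain y where y: "y \<in> B - B'" and C: "insert y (B' - {x}) \<in> Bs"
        using M B B' x unfolding matroid_bases_def by blast
      have "P (B, insert y (B' - {x}))" using C B B' x unfolding P_def by auto
      then have "f p \<le> card (B - insert y (B' - {x}))" using minp unfolding f_def by fastforce
      moreover have "B - insert y (B' - {x}) = (B - B') - {y}" using y \<open>x \<notin> B\<close> by auto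
      moreover have "card ((B - B') - {y}) < card (B - B')" using y
        by (intro card_Diff1_less) auto
      ultimately show False unfolding f_def p by simp
    qed
  qed
  have "B \<inter> J \<subseteq> I"
  proof
    fix e assume e: "e \<in> B \<inter> J"
    then have "m_indep Bs (insert e I)" using B unfolding m_indep_def by blast
    then show "e \<in> I" using no e by blast
  qed
  then have eq: "B' - B = J - I" using BJ_sub B' B by auto
  have "card (B - B') = card (B' - B)"
    using bases_card_eq[OF M B(1) B'(1)] by (simp add: card_Diff_subset_Int Int_commute)
  moreover have "card (B - B') \<le> card (I - J)" using BI_sub B' by (intro card_mono) auto
  moreover have "card (I - J) < card (J - I)"
    using lt card_mono[of I "I \<inter> J"] by (simp add: card_Diff_subset_Int Int_commute)
  ultimately show False using eq by simp
qed

lemma augment_to: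
  fixes Bs :: "'n::finite set set"
  assumes M: "matroid_bases UNIV Bs" and I: "m_indep Bs I" and J: "m_indep Bs J"
  shows "card I \<le> m \<Longrightarrow> m \<le> card J \<Longrightarrow>
    \<exists>T. T \<subseteq> J - I \<and> card T = m - card I \<and> m_indep Bs (I \<union> T)"
proof (induction m)
  case 0
  then show ?case using I by auto
next
  case (Suc m)
  show ?case
  proof (cases "card I = Suc m")
    case True
    then show ?thesis using I by (intro exI[of _ "{}"]) auto
  next
    case False
    then have "card I \<le> m" "m \<le> card J" using Suc.prems by auto
    then obtain T where T: "T \<subseteq> J - I" "card T = m - card I" "m_indep Bs (I \<union> T)"
      using Suc.IH by blast
    have "card (I \<union> T) = m" using T \<open>card I \<le> m\<close> by (subst card_Un_disjoint) auto
    then have "card (I \<union> T) < card J" using Suc.prems by simp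
    then obtain e where e: "e \<in> J - (I \<union> T)" "m_indep Bs (insert e (I \<union> T))"
      using augment[OF M T(3) J] by blast
    have "card (insert e T) = Suc (card T)" using e by (simp add: card_insert_if)
    then show ?thesis using e T \<open>card I \<le> m\<close> False Suc.prems
      by (intro exI[of _ "insert e T"]) auto
  qed
qed

lemma indep_card_le:
  fixes Bs :: "'n::finite set set"
  assumes M: "matroid_bases UNIV Bs" and "m_indep Bs I" and "B \<in> Bs"
  shows "card I \<le> card B"
proof -
  obtain B0 where "B0 \<in> Bs" "I \<subseteq> B0" using assms unfolding m_indep_def by blast
  then show ?thesis using bases_card_eq[OF M \<open>B0 \<in> Bs\<close> assms(3)] by (metis card_mono finite)
qed

lemma indep_card_base:
  fixes Bs :: "'n::finite set set"
  assumes M: "matroid_bases UNIV Bs" and "m_indep Bs I" and "B \<in> Bs" and "card I = card B"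
  shows "I \<in> Bs"
proof -
  obtain B0 where "B0 \<in> Bs" "I \<subseteq> B0" using assms unfolding m_indep_def by blast
  then have "I = B0" using bases_card_eq[OF M \<open>B0 \<in> Bs\<close> assms(3)] assms(4)
    by (metis card_subset_eq finite)
  then show ?thesis using \<open>B0 \<in> Bs\<close> by simp
qed

lemma extend_within:
  fixes Bs :: "'n::finite set set"
  assumes M: "matroid_bases UNIV Bs" and I: "m_indep Bs I" "I \<subseteq> Z"
    and D0: "D0 \<in> Bs" "D0 \<subseteq> Z"
  shows "\<exists>D\<in>Bs. I \<subseteq> D \<and> D \<subseteq> Z"
proof -
  have le: "card I \<le> card D0" using indep_card_le[OF M I(1) D0(1)] .
  obtain T where T: "T \<subseteq> D0 - I" "card T = card D0 - card I" "m_indep Bs (I \<union> T)"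
    using augment_to[OF M I(1) base_indep[OF D0(1)] le] by blast
  have "card (I \<union> T) = card D0" using T le by (subst card_Un_disjoint) auto
  then have "I \<union> T \<in> Bs" using indep_card_base[OF M T(3) D0(1)] by simp
  then show ?thesis using T I D0 by (intro bexI[of _ "I \<union> T"]) auto
qed

lemma rank_attained:
  fixes Bs :: "'n::finite set set"
  assumes M: "matroid_bases UNIV Bs"
  shows "\<exists>I. m_indep Bs I \<and> I \<subseteq> A \<and> card I = m_rank Bs A"
proof -
  have "finite {card I |I. m_indep Bs I \<and> I \<subseteq> A}" by simp
  moreover have "{card I |I. m_indep Bs I \<and> I \<subseteq> A} \<noteq> {}" using empty_indep[OF M] by auto
  ultimately have "m_rank Bs A \<in> {card I |I. m_indep Bs I \<and> I \<subseteq> A}"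
    unfolding m_rank_def by (rule Max_in)
  then show ?thesis by auto
qed

lemma rank_ge:
  fixes Bs :: "'n::finite set set"
  assumes "m_indep Bs I" "I \<subseteq> A"
  shows "card I \<le> m_rank Bs A"
  unfolding m_rank_def using assms by (intro Max_ge) auto

lemma rank_UNIV:
  fixes Bs :: "'n::finite set set"
  assumes M: "matroid_bases UNIV Bs" and B: "B \<in> Bs"
  shows "m_rank Bs UNIV = card B"
proof -
  obtain I where "m_indep Bs I" "card I = m_rank Bs UNIV" using rank_attained[OF M] by blast
  then have "m_rank Bs UNIV \<le> card B" using indep_card_le[OF M _ B] by metis
  moreover have "card B \<le> m_rank Bs UNIV" using rank_ge[OF base_indep[OF B]] by simp
  ultimately show ?thesis by simp
qed

text \<open>A circuit-hyperplane X of a matroid of rank r has exactly r elements: as a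
  circuit its rank is card X - 1, as a hyperplane its rank is r - 1.\<close>
lemma circuit_hyperplane_card:
  fixes Bs :: "'n::finite set set"
  assumes M: "matroid_bases UNIV Bs" and B0: "B0 \<in> Bs" and r: "0 < card B0"
    and C: "m_circuit UNIV Bs X" and H: "m_hyperplane UNIV Bs X"
  shows "card X = card B0"
proof -
  have dep: "\<not> m_indep Bs X" and minimal: "\<And>D. D \<subset> X \<Longrightarrow> m_indep Bs D"
    using C unfolding m_circuit_def by auto
  have "X \<noteq> {}" using dep empty_indep[OF M] by auto
  then obtain x where x: "x \<in> X" by auto
  then have "m_indep Bs (X - {x})" using minimal by blast
  then have ge: "card X - 1 \<le> m_rank Bs X" using rank_ge[of Bs "X - {x}" X] x by auto
  obtain I where I: "m_indep Bs I" "I \<subseteq> X" "card I = m_rank Bs X"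
    using rank_attained[OF M] by blast
  have "I \<noteq> X" using I dep by auto
  then have "card I < card X" using I by (intro psubset_card_mono) auto
  then have "m_rank Bs X = card X - 1" using ge I by simp
  moreover have "m_rank Bs X = card B0 - 1"
    using H rank_UNIV[OF M B0] unfolding m_hyperplane_def by simp
  moreover have "card X > 0" using \<open>X \<noteq> {}\<close> by (simp add: card_gt_0_iff)
  ultimately show ?thesis using r by simp
qed

text \<open>Adding any element w outside a hyperplane X raises the rank to r, so the set
  insert w X contains a base.\<close>
lemma hyperplane_insert_contains_base:
  fixes Bs :: "'n::finite set set"
  assumes M: "matroid_bases UNIV Bs" and B0: "B0 \<in> Bs" and r: "0 < card B0"
    and H: "m_hyperplane UNIV Bs X" and w: "w \<notin> X"
  shows "\<exists>D\<in>Bs. D \<subseteq> insert w X"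
proof -
  have rX: "m_rank Bs X = card B0 - 1"
    using H rank_UNIV[OF M B0] unfolding m_hyperplane_def by simp
  have "m_closure UNIV Bs X = X" using H unfolding m_hyperplane_def by simp
  then have ne: "m_rank Bs (insert w X) \<noteq> m_rank Bs X" using w unfolding m_closure_def by blast
  obtain I where I: "m_indep Bs I" "I \<subseteq> X" "card I = m_rank Bs X"
    using rank_attained[OF M] by blast
  have "m_rank Bs X \<le> m_rank Bs (insert w X)" using rank_ge[OF I(1), of "insert w X"] I by auto
  then have ge: "card B0 \<le> m_rank Bs (insert w X)" using ne rX r by simp
  obtain J where J: "m_indep Bs J" "J \<subseteq> insert w X" "card J = m_rank Bs (insert w X)"
    using rank_attained[OF M] by blast
  have "card J = card B0" using indep_card_le[OF M J(1) B0] ge J by simp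
  then have "J \<in> Bs" using indep_card_base[OF M J(1) B0] by simp
  then show ?thesis using J by blast
qed

text \<open>Only the exchanges
  involving the new base X need an argument; exchanges into X use that X is a
  hyperplane, exchanges out of X use augmentation of the independent set X - {x}.\<close>
lemma relaxation_matroid:
  fixes Bs :: "'n::finite set set"
  assumes M: "matroid_bases UNIV Bs" and B0: "B0 \<in> Bs" and r: "0 < card B0"
    and C: "m_circuit UNIV Bs X" and H: "m_hyperplane UNIV Bs X"
  shows "matroid_bases UNIV (Bs \<union> {X})"
proof -
  have cX: "card X = card B0" using circuit_hyperplane_card[OF assms] .
  have minimal: "\<And>D. D \<subset> X \<Longrightarrow> m_indep Bs D" using C unfolding m_circuit_def by auto
  have cB: "\<And>B. B \<in> Bs \<Longrightarrow> card B = card B0" using bases_card_eq[OF M _ B0] by blast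
  have into_X: "\<exists>y\<in>X - B1. insert y (B1 - {x}) \<in> Bs \<union> {X}"
    if B1: "B1 \<in> Bs" and x: "x \<in> B1 - X" for B1 x
  proof (cases "B1 - {x} \<subseteq> X")
    case True
    have cB1: "card (B1 - {x}) < card X" using cB[OF B1] cX x r by simp
    then have "\<not> X \<subseteq> B1 - {x}" by (meson card_mono finite leD)
    then obtain y where y: "y \<in> X" "y \<notin> B1 - {x}" by auto
    have "insert y (B1 - {x}) \<subseteq> X" using True y by auto
    moreover have "card (insert y (B1 - {x})) = card X" using y cB[OF B1] cX x r by simp
    ultimately have "insert y (B1 - {x}) = X" by (simp add: card_subset_eq)
    then show ?thesis using y x by auto
  next
    case False
    then obtain w where w: "w \<in> B1 - {x}" "w \<notin> X" by auto
    obtain D0 where D0: "D0 \<in> Bs" "D0 \<subseteq> insert w X"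
      using hyperplane_insert_contains_base[OF M B0 r H w(2)] by blast
    have "m_indep Bs (B1 - {x})" using B1 by (intro indep_subset[OF base_indep]) auto
    then obtain D where D: "D \<in> Bs" "B1 - {x} \<subseteq> D" "D \<subseteq> (B1 - {x}) \<union> X"
      using extend_within[OF M _ _ D0(1), of "B1 - {x}" "(B1 - {x}) \<union> X"] D0 w by blast
    have "card D = card (B1 - {x}) + 1" using cB[OF D(1)] cB[OF B1] x r by simp
    then have "card (D - (B1 - {x})) = 1" using D(2) by (simp add: card_Diff_subset)
    then obtain y where y: "D - (B1 - {x}) = {y}" by (meson card_1_singletonE)
    then have "D = insert y (B1 - {x})" using D(2) by auto
    moreover have "y \<in> X" "y \<notin> B1 - {x}" using y D(3) by auto
    ultimately show ?thesis using D(1) x by auto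
  qed
  have out_of_X: "\<exists>y\<in>B2 - X. insert y (X - {x}) \<in> Bs"
    if B2: "B2 \<in> Bs" and x: "x \<in> X - B2" for B2 x
  proof -
    have I: "m_indep Bs (X - {x})" using minimal x by blast
    have "card (X - {x}) < card B2" using cX cB[OF B2] x r by simp
    then obtain y where y: "y \<in> B2 - (X - {x})" "m_indep Bs (insert y (X - {x}))"
      using augment[OF M I base_indep[OF B2]] by blast
    have "card (insert y (X - {x})) = card B2" using y cX cB[OF B2] x r by simp
    then have "insert y (X - {x}) \<in> Bs" using indep_card_base[OF M y(2) B2] by simp
    then show ?thesis using y x by auto
  qed
  have "\<exists>y\<in>B2 - B1. insert y (B1 - {x}) \<in> Bs \<union> {X}"
    if B1: "B1 \<in> Bs \<union> {X}" and B2: "B2 \<in> Bs \<union> {X}" and x: "x \<in> B1 - B2" for B1 B2 x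
  proof (cases "B1 \<in> Bs")
    case B1_old: True
    show ?thesis
    proof (cases "B2 \<in> Bs")
      case True
      then show ?thesis using M B1_old x unfolding matroid_bases_def by blast
    next
      case False
      then show ?thesis using into_X[OF B1_old] B2 x by auto
    qed
  next
    case False
    then have "B1 = X" "B2 \<in> Bs" using B1 B2 x by auto
    then show ?thesis using out_of_X x by auto
  qed
  then show ?thesis using M unfolding matroid_bases_def by auto
qed

lemma relaxation_small_indep:
  fixes Bs :: "'n::finite set set"
  assumes M: "matroid_bases UNIV Bs" and B0: "B0 \<in> Bs" and r: "0 < card B0"
    and C: "m_circuit UNIV Bs X" and H: "m_hyperplane UNIV Bs X"
    and I: "m_indep (Bs \<union> {X}) I" and cI: "card I < card B0"
  shows "m_indep Bs I"
proof -
  obtain B where B: "B \<in> Bs \<union> {X}" "I \<subseteq> B" using I unfolding m_indep_def by blast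
  show ?thesis
  proof (cases "B \<in> Bs")
    case True
    then show ?thesis using B unfolding m_indep_def by blast
  next
    case False
    then have "I \<subset> X" using B cI circuit_hyperplane_card[OF M B0 r C H] by auto
    then show ?thesis using C unfolding m_circuit_def by blast
  qed
qed

lemma indic_inner_card:
  "indic_vec E \<bullet> indic_vec (B::'n::finite set) = real (card (B \<inter> E))"
proof -
  have "indic_vec E \<bullet> indic_vec B = (\<Sum>i\<in>UNIV. if i \<in> B \<inter> E then 1 else (0::real))"
    unfolding indic_vec_def inner_vec_def by (intro sum.cong) auto
  also have "\<dots> = real (card (B \<inter> E))" by (simp add: sum.If_cases Int_def)
  finally show ?thesis .
qed

lemma indic_exchange_sum:
  assumes "T \<subseteq> P - Q" "S \<subseteq> Q - P"
  shows "indic_vec ((P - T) \<union> S) + indic_vec ((Q - S) \<union> T) = indic_vec P + indic_vec Q"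
  using assms unfolding indic_vec_def by (auto simp: vec_eq_iff)

lemma exchange_card_sum:
  fixes P Q :: "'n::finite set"
  assumes "T \<subseteq> P - Q" "S \<subseteq> Q - P"
  shows "card (((P - T) \<union> S) \<inter> E) + card (((Q - S) \<union> T) \<inter> E) = card (P \<inter> E) + card (Q \<inter> E)"
proof -
  have "real (card (((P - T) \<union> S) \<inter> E)) + real (card (((Q - S) \<union> T) \<inter> E))
      = indic_vec E \<bullet> (indic_vec ((P - T) \<union> S) + indic_vec ((Q - S) \<union> T))"
    by (simp add: inner_add_right indic_inner_card)
  also have "\<dots> = real (card (P \<inter> E)) + real (card (Q \<inter> E))"
    by (simp add: indic_exchange_sum[OF assms] inner_add_right indic_inner_card)
  finally show ?thesis by linarith
qed

text \<open>For a good partition this holds in the relaxation with k_i = r_i - a_i, and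
  it is all the split construction needs.\<close>
definition layer_condition :: "'a set set \<Rightarrow> 'a set \<Rightarrow> nat \<Rightarrow> nat \<Rightarrow> bool" where
  "layer_condition Bs E k1 k2 \<longleftrightarrow>
     (\<forall>X Y. m_indep Bs X \<and> X \<subseteq> E \<and> card X = k1 \<and> m_indep Bs Y \<and> Y \<subseteq> - E \<and> card Y = k2
        \<longrightarrow> X \<union> Y \<in> Bs)"

lemma layer_conditionD:
  assumes "layer_condition Bs E k1 k2"
    and "m_indep Bs X" "X \<subseteq> E" "card X = k1" "m_indep Bs Y" "Y \<subseteq> - E" "card Y = k2"
  shows "X \<union> Y \<in> Bs"
  using assms unfolding layer_condition_def by blast

text \<open>The bases meeting E in at most k elements; these form the two halves of the split.\<close>
definition low_bases :: "'a set set \<Rightarrow> 'a set \<Rightarrow> nat \<Rightarrow> 'a set set" where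
  "low_bases Bs E k = {B \<in> Bs. card (B \<inter> E) \<le> k}"

lemma layer_condition_swap:
  assumes "layer_condition Bs E k1 k2"
  shows "layer_condition Bs (- E) k2 k1"
  unfolding layer_condition_def
proof (intro allI impI)
  fix X Y
  assume "m_indep Bs X \<and> X \<subseteq> - E \<and> card X = k2 \<and> m_indep Bs Y \<and> Y \<subseteq> - (- E) \<and> card Y = k1"
  then have "Y \<union> X \<in> Bs" using layer_conditionD[OF assms] by simp
  then show "X \<union> Y \<in> Bs" by (simp add: Un_commute)
qed

lemma layer_extend_within:
  fixes Bs :: "'n::finite set set"
  assumes M: "matroid_bases UNIV Bs" and L: "layer_condition Bs E k1 k2"
    and X: "m_indep Bs X" "X \<subseteq> Z \<inter> E" "k1 \<le> card X"
    and Y: "m_indep Bs Y" "Y \<subseteq> Z - E" "k2 \<le> card Y"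
    and I: "m_indep Bs I" "I \<subseteq> Z"
  shows "\<exists>D\<in>Bs. I \<subseteq> D \<and> D \<subseteq> Z"
proof -
  obtain X1 where X1: "X1 \<subseteq> X" "card X1 = k1" using obtain_subset_with_card_n X(3) by metis
  obtain Y1 where Y1: "Y1 \<subseteq> Y" "card Y1 = k2" using obtain_subset_with_card_n Y(3) by metis
  have "m_indep Bs X1" "X1 \<subseteq> E" using indep_subset[OF X(1) X1(1)] X(2) X1(1) by auto
  moreover have "m_indep Bs Y1" "Y1 \<subseteq> - E" using indep_subset[OF Y(1) Y1(1)] Y(2) Y1(1) by auto
  ultimately have "X1 \<union> Y1 \<in> Bs" using layer_conditionD[OF L] X1(2) Y1(2) by blast
  then show ?thesis using extend_within[OF M I] X Y X1 Y1 by blast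
qed

text \<open>An exchange that would
  push B1 above k1 elements in E can be redone inside the complement of E, where the
  layer condition turns the augmented set into a base again.\<close>
lemma low_bases_matroid:
  fixes Bs :: "'n::finite set set"
  assumes M: "matroid_bases UNIV Bs" and B0: "B0 \<in> Bs" and r: "k1 + k2 = card B0"
    and L: "layer_condition Bs E k1 k2" and ne: "low_bases Bs E k1 \<noteq> {}"
  shows "matroid_bases UNIV (low_bases Bs E k1)"
proof -
  have cB: "\<And>B. B \<in> Bs \<Longrightarrow> card B = card B0" using bases_card_eq[OF M _ B0] by blast
  have exch: "\<exists>y\<in>B2 - B1. insert y (B1 - {x}) \<in> low_bases Bs E k1"
    if B1: "B1 \<in> Bs" "card (B1 \<inter> E) \<le> k1" and B2: "B2 \<in> Bs" "card (B2 \<inter> E) \<le> k1"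
      and x: "x \<in> B1 - B2" for B1 B2 x
  proof (cases "x \<in> E \<or> card (B1 \<inter> E) < k1")
    case True
    obtain y where y: "y \<in> B2 - B1" "insert y (B1 - {x}) \<in> Bs"
      using M B1 B2 x unfolding matroid_bases_def by blast
    have "card (insert y (B1 - {x}) \<inter> E) \<le> card (insert y ((B1 - {x}) \<inter> E))"
      by (intro card_mono) auto
    also have "\<dots> \<le> Suc (card ((B1 - {x}) \<inter> E))" by (simp add: card_insert_if)
    also have "\<dots> \<le> k1"
    proof (cases "x \<in> E")
      case True
      then have "(B1 - {x}) \<inter> E = (B1 \<inter> E) - {x}" by auto
      then show ?thesis using True x B1(2) card_Suc_Diff1[of "B1 \<inter> E" x] by simp
    next
      case False
      have "card ((B1 - {x}) \<inter> E) \<le> card (B1 \<inter> E)" by (intro card_mono) auto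
      then show ?thesis using False \<open>x \<in> E \<or> card (B1 \<inter> E) < k1\<close> by simp
    qed
    finally show ?thesis using y unfolding low_bases_def by auto
  next
    case False
    then have xE: "x \<notin> E" and cB1: "card (B1 \<inter> E) = k1" using B1 by auto
    have cY1: "card (B1 - E) = k2" using card_Int_Diff[of B1 E] cB[OF B1(1)] cB1 r by simp
    have cY2: "k2 \<le> card (B2 - E)" using card_Int_Diff[of B2 E] cB[OF B2(1)] B2(2) r by simp
    have iY1: "m_indep Bs (B1 - E - {x})" and iY2: "m_indep Bs (B2 - E)"
      using B1(1) B2(1) by (auto intro: indep_subset base_indep)
    have "card (B1 - E - {x}) < card (B1 - E)" using x xE by (intro card_Diff1_less) auto
    then have "card (B1 - E - {x}) < card (B2 - E)" using cY1 cY2 by linarith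
    then obtain y where y: "y \<in> (B2 - E) - (B1 - E - {x})" "m_indep Bs (insert y (B1 - E - {x}))"
      using augment[OF M iY1 iY2] by blast
    have yB1: "y \<notin> B1" using y x by auto
    have c2: "card (insert y (B1 - E - {x})) = k2"
      using yB1 cY1 x xE card_Suc_Diff1[of "B1 - E" x] by (simp add: card_insert_if)
    have "m_indep Bs (B1 \<inter> E)" using B1(1) by (auto intro: indep_subset base_indep)
    moreover have "insert y (B1 - E - {x}) \<subseteq> - E" using y(1) by auto
    ultimately have "(B1 \<inter> E) \<union> insert y (B1 - E - {x}) \<in> Bs"
      using layer_conditionD[OF L _ _ cB1 y(2) _ c2] by blast
    moreover have "(B1 \<inter> E) \<union> insert y (B1 - E - {x}) = insert y (B1 - {x})" using xE by auto
    moreover have "insert y (B1 - {x}) \<inter> E = B1 \<inter> E" using xE y(1) by auto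
    ultimately show ?thesis using cB1 yB1 y(1) unfolding low_bases_def by auto
  qed
  have "\<forall>B1\<in>low_bases Bs E k1. \<forall>B2\<in>low_bases Bs E k1. \<forall>x\<in>B1 - B2.
      \<exists>y\<in>B2 - B1. insert y (B1 - {x}) \<in> low_bases Bs E k1"
    using exch unfolding low_bases_def by blast
  then show ?thesis using ne unfolding matroid_bases_def by simp
qed

text \<open>Fill Q \<inter> E up to k1 elements by a set T taken from P \<inter> E, then complete
  P - T to a base by a set S from Q - E.  If P has enough elements in E to spare,
  (Q - S) \<union> T is a base with exactly k1 elements in E.\<close>
lemma layer_exchange_step:
  fixes Bs :: "'n::finite set set"
  assumes M: "matroid_bases UNIV Bs" and B0: "B0 \<in> Bs" and r: "k1 + k2 = card B0"
    and L: "layer_condition Bs E k1 k2" and P: "P \<in> Bs" and Q: "Q \<in> Bs"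
    and hi: "k1 \<le> card (P \<inter> E)" and lo: "card (Q \<inter> E) \<le> k1"
    and spare: "k1 - card (Q \<inter> E) \<le> card (P \<inter> E) - k1"
  shows "\<exists>T S. T \<subseteq> P - Q \<and> S \<subseteq> Q - P \<and> (P - T) \<union> S \<in> Bs \<and> (Q - S) \<union> T \<in> Bs \<and>
     card (((Q - S) \<union> T) \<inter> E) = k1"
proof -
  have cB: "\<And>B. B \<in> Bs \<Longrightarrow> card B = card B0" using bases_card_eq[OF M _ B0] by blast
  have cQ: "card (Q \<inter> E) + card (Q - E) = card B0" using card_Int_Diff[of Q E] cB[OF Q] by simp
  have iPE: "m_indep Bs (P \<inter> E)" and iQE: "m_indep Bs (Q \<inter> E)" and iQE': "m_indep Bs (Q - E)"
    using P Q by (auto intro: indep_subset base_indep)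
  obtain T where T: "T \<subseteq> (P \<inter> E) - (Q \<inter> E)" "card T = k1 - card (Q \<inter> E)"
      "m_indep Bs ((Q \<inter> E) \<union> T)"
    using augment_to[OF M iQE iPE, of k1] hi lo by auto
  have TP: "T \<subseteq> P \<inter> E" using T(1) by auto
  have iPT: "m_indep Bs (P - T)" "m_indep Bs (P \<inter> E - T)"
    using P by (auto intro: indep_subset base_indep)
  have cPT: "k1 \<le> card (P \<inter> E - T)" using T(2) spare hi TP by (simp add: card_Diff_subset)
  have cQE: "k2 \<le> card (Q - E)" using cQ r lo by linarith
  have "P \<inter> E - T \<subseteq> ((P - T) \<union> (Q - E)) \<inter> E" "Q - E \<subseteq> ((P - T) \<union> (Q - E)) - E"
    "P - T \<subseteq> (P - T) \<union> (Q - E)" by auto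
  then obtain D where D: "D \<in> Bs" "P - T \<subseteq> D" "D \<subseteq> (P - T) \<union> (Q - E)"
    using layer_extend_within[OF M L iPT(2) _ cPT iQE' _ cQE iPT(1)] by blast
  define S where "S = D - (P - T)"
  have S: "S \<subseteq> (Q - E) - P" using D TP unfolding S_def by auto
  have DS: "D = (P - T) \<union> S" using D unfolding S_def by auto
  have "card D = card (P - T) + card S" unfolding DS using S by (intro card_Un_disjoint) auto
  moreover have "card (P - T) = card P - card T" "card T \<le> card P"
    using TP by (auto simp: card_Diff_subset intro: card_mono)
  ultimately have "card S = card T" using cB[OF D(1)] cB[OF P] by linarith
  moreover have "card ((Q - E) - S) = card (Q - E) - card S"
    using S by (intro card_Diff_subset) auto
  ultimately have cQS: "card ((Q - E) - S) = k2" using T(2) cQ r lo by arith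
  have cQT: "card ((Q \<inter> E) \<union> T) = k1" using T lo by (subst card_Un_disjoint) auto
  have "(Q \<inter> E) \<union> T \<subseteq> E" "(Q - E) - S \<subseteq> - E" "m_indep Bs ((Q - E) - S)"
    using TP Q by (auto intro: indep_subset base_indep)
  then have "((Q \<inter> E) \<union> T) \<union> ((Q - E) - S) \<in> Bs"
    using layer_conditionD[OF L T(3) _ cQT _ _ cQS] by blast
  moreover have "((Q \<inter> E) \<union> T) \<union> ((Q - E) - S) = (Q - S) \<union> T" using S by auto
  moreover have "((Q - S) \<union> T) \<inter> E = (Q \<inter> E) \<union> T" using S TP by auto
  ultimately show ?thesis using D(1) DS S T(1) cQT by (intro exI[of _ T] exI[of _ S]) auto
qed

text \<open>The exchange step is applied to E or, with the roles of the two
  bases swapped, to the complement of E, depending on which side has room to spare.\<close>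
lemma layer_exchange:
  fixes Bs :: "'n::finite set set"
  assumes M: "matroid_bases UNIV Bs" and B0: "B0 \<in> Bs" and r: "k1 + k2 = card B0"
    and L: "layer_condition Bs E k1 k2" and B: "B \<in> Bs" and B': "B' \<in> Bs"
    and hi: "k1 < card (B \<inter> E)" and lo: "card (B' \<inter> E) < k1"
  shows "\<exists>T S. T \<subseteq> B - B' \<and> S \<subseteq> B' - B \<and> (B - T) \<union> S \<in> Bs \<and> (B' - S) \<union> T \<in> Bs \<and>
     card (((B' - S) \<union> T) \<inter> E) \<le> k1 \<and> card (((B - T) \<union> S) \<inter> E) < card (B \<inter> E)"
proof (cases "k1 - card (B' \<inter> E) \<le> card (B \<inter> E) - k1")
  case True
  then obtain T S where TS: "T \<subseteq> B - B'" "S \<subseteq> B' - B" "(B - T) \<union> S \<in> Bs"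
      "(B' - S) \<union> T \<in> Bs" "card (((B' - S) \<union> T) \<inter> E) = k1"
    using layer_exchange_step[OF M B0 r L B B'] hi lo by fastforce
  moreover have "card (((B - T) \<union> S) \<inter> E) < card (B \<inter> E)"
    using exchange_card_sum[OF TS(1,2), of E] TS(5) lo by linarith
  ultimately show ?thesis by blast
next
  case False
  have split: "\<And>D. D \<in> Bs \<Longrightarrow> card (D \<inter> - E) + card (D \<inter> E) = card B0"
    using bases_card_eq[OF M _ B0] card_Int_Diff by (metis Diff_eq add.commute finite)
  have r': "k2 + k1 = card B0" using r by simp
  have "k2 \<le> card (B' \<inter> - E)" "card (B \<inter> - E) \<le> k2"
    using split[OF B] split[OF B'] r hi lo by linarith+
  moreover have "k2 - card (B \<inter> - E) \<le> card (B' \<inter> - E) - k2"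
    using split[OF B] split[OF B'] r False by arith
  ultimately obtain T S where TS: "T \<subseteq> B' - B" "S \<subseteq> B - B'" "(B' - T) \<union> S \<in> Bs"
      "(B - S) \<union> T \<in> Bs" "card (((B - S) \<union> T) \<inter> - E) = k2"
    using layer_exchange_step[OF M B0 r' layer_condition_swap[OF L] B' B] by blast
  have "card (((B - S) \<union> T) \<inter> E) = k1" using split[OF TS(4)] TS(5) r by linarith
  moreover have "card (((B' - T) \<union> S) \<inter> E) \<le> k1"
    using exchange_card_sum[OF TS(2,1), of E] False hi lo calculation by arith
  ultimately show ?thesis using TS(1-4) hi by (intro exI[of _ S] exI[of _ T]) auto
qed

lemma count_hull_le:
  assumes "\<forall>B\<in>L. card (B \<inter> E) \<le> k" and "x \<in> convex hull (indic_vec ` L)"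
  shows "indic_vec E \<bullet> x \<le> real k"
proof -
  have "convex hull (indic_vec ` L) \<subseteq> {x. indic_vec E \<bullet> x \<le> real k}"
    by (rule hull_minimal) (use assms(1) in \<open>auto simp: indic_inner_card convex_halfspace_le\<close>)
  then show ?thesis using assms(2) by auto
qed

lemma count_hull_ge:
  assumes "\<forall>B\<in>L. k \<le> card (B \<inter> E)" and "x \<in> convex hull (indic_vec ` L)"
  shows "real k \<le> indic_vec E \<bullet> x"
proof -
  have "convex hull (indic_vec ` L) \<subseteq> {x. indic_vec E \<bullet> x \<ge> real k}"
    by (rule hull_minimal) (use assms(1) in \<open>auto simp: indic_inner_card convex_halfspace_ge\<close>)
  then show ?thesis using assms(2) by auto
qed

lemma polytopes_meet_in_face:
  fixes La Lb :: "'n::finite set set"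
  assumes a: "\<forall>B\<in>La. card (B \<inter> E) \<le> k" and b: "\<forall>B\<in>Lb. k \<le> card (B \<inter> E)"
    and c: "\<And>B. B \<in> La \<Longrightarrow> card (B \<inter> E) = k \<Longrightarrow> B \<in> Lb"
  shows "(convex hull (indic_vec ` La) \<inter> convex hull (indic_vec ` Lb))
           face_of convex hull (indic_vec ` La)"
proof -
  define P where "P = convex hull (indic_vec ` La)"
  define F where "F = P \<inter> {x. indic_vec E \<bullet> x = real k}"
  have F: "F face_of P" unfolding F_def P_def
    by (rule face_of_Int_supporting_hyperplane_le) (use count_hull_le[OF a] in auto)
  have "compact (indic_vec ` La)" by (intro finite_imp_compact) simp
  then obtain S where S: "S \<subseteq> indic_vec ` La" "F = convex hull S"
    using face_of_convex_hull_subset[of "indic_vec ` La" F] F unfolding P_def by blast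
  have "S \<subseteq> indic_vec ` Lb"
  proof
    fix s assume s: "s \<in> S"
    then obtain B where B: "B \<in> La" "s = indic_vec B" using S by auto
    have "s \<in> F" using s S hull_inc by metis
    then have "card (B \<inter> E) = k" unfolding F_def using B by (simp add: indic_inner_card)
    then show "s \<in> indic_vec ` Lb" using c B by auto
  qed
  then have "F \<subseteq> convex hull (indic_vec ` Lb)" using S hull_mono by metis
  moreover have "P \<inter> convex hull (indic_vec ` Lb) \<subseteq> F"
    unfolding F_def P_def using count_hull_le[OF a] count_hull_ge[OF b] by (auto intro: antisym)
  ultimately have "P \<inter> convex hull (indic_vec ` Lb) = F" unfolding F_def by auto
  then show ?thesis using F unfolding P_def by simp
qed

lemma convex_comb_shift:
  fixes G :: "'a::real_vector set"
  assumes G: "finite G" and u: "\<forall>x\<in>G. 0 \<le> u x" "sum u G = 1"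
    and abcd: "a \<in> G" "b \<in> G" "a \<noteq> b" "c \<in> G" "d \<in> G"
    and mu: "0 \<le> \<mu>" "\<mu> \<le> u a" "\<mu> \<le> u b"
  shows "(\<Sum>x\<in>G. u x *\<^sub>R x) - \<mu> *\<^sub>R (a + b) + \<mu> *\<^sub>R (c + d) \<in> convex hull G"
proof -
  define \<delta> where "\<delta> = (\<lambda>(e::'a) x. if x = e then \<mu> else (0::real))"
  define w where "w = (\<lambda>x. u x - \<delta> a x - \<delta> b x + \<delta> c x + \<delta> d x)"
  have "\<forall>x\<in>G. 0 \<le> w x" using u(1) abcd(3) mu unfolding w_def \<delta>_def by auto
  moreover have "\<And>e. e \<in> G \<Longrightarrow> sum (\<delta> e) G = \<mu>" using G unfolding \<delta>_def by simp
  then have "sum w G = 1" unfolding w_def using abcd u(2) by (simp add: sum.distrib sum_subtractf)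
  moreover have "(\<Sum>x\<in>G. \<delta> e x *\<^sub>R x) = \<mu> *\<^sub>R e" if "e \<in> G" for e
  proof -
    have "(\<Sum>x\<in>G. \<delta> e x *\<^sub>R x) = (\<Sum>x\<in>G. if x = e then \<mu> *\<^sub>R e else 0)"
      unfolding \<delta>_def by (intro sum.cong) auto
    then show ?thesis using G that by simp
  qed
  then have "(\<Sum>x\<in>G. w x *\<^sub>R x) = (\<Sum>x\<in>G. u x *\<^sub>R x) - \<mu> *\<^sub>R (a + b) + \<mu> *\<^sub>R (c + d)"
    unfolding w_def using abcd
    by (simp add: scaleR_add_left scaleR_diff_left sum.distrib sum_subtractf scaleR_add_right)
  ultimately show ?thesis unfolding convex_hull_finite[OF G] by blast
qed

lemma convex_comb_support_hull:
  assumes G: "finite G" and u: "\<forall>x\<in>G. 0 \<le> u x" "sum u G = 1"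
    and supp: "\<And>x. x \<in> G \<Longrightarrow> 0 < u x \<Longrightarrow> f x \<in> S"
  shows "(\<Sum>x\<in>G. u x *\<^sub>R f x) \<in> convex hull S"
proof -
  define G' where "G' = {x\<in>G. u x \<noteq> 0}"
  have G': "finite G'" "G' \<subseteq> G" using G unfolding G'_def by auto
  have "sum u G' = sum u G" by (rule sum.mono_neutral_left) (auto simp: G'_def G)
  moreover have "(\<Sum>x\<in>G'. u x *\<^sub>R f x) = (\<Sum>x\<in>G. u x *\<^sub>R f x)"
    by (rule sum.mono_neutral_left) (auto simp: G'_def G)
  moreover have "f x \<in> convex hull S" if "x \<in> G'" for x
  proof -
    have "0 < u x" using u(1) that unfolding G'_def by force
    then show ?thesis using supp[of x] that hull_inc unfolding G'_def by fastforce
  qed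
  moreover have "\<forall>x\<in>G'. 0 \<le> u x" using u(1) G'(2) by auto
  ultimately show ?thesis
    using convex_sum[OF G'(1) convex_convex_hull, of u f] u(2) by simp
qed

lemma weighted_average_below:
  fixes u f :: "'a \<Rightarrow> real"
  assumes G: "finite G" and u: "\<forall>x\<in>G. 0 \<le> u x" "sum u G = 1"
    and avg: "(\<Sum>x\<in>G. u x * f x) \<le> c" and a: "a \<in> G" "0 < u a" "c < f a"
  shows "\<exists>b\<in>G. 0 < u b \<and> f b < c"
proof (rule ccontr)
  assume none: "\<not> ?thesis"
  have ge: "\<forall>x\<in>G. u x * c \<le> u x * f x"
  proof
    fix x assume x: "x \<in> G"
    show "u x * c \<le> u x * f x"
    proof (cases "u x = 0")
      case False
      then have "c \<le> f x" using none u(1) x by force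
      then show ?thesis using u(1) x by (simp add: mult_left_mono)
    qed simp
  qed
  have "u a * c < u a * f a" using a by (simp add: mult_strict_left_mono)
  then have "(\<Sum>x\<in>G. u x * c) < (\<Sum>x\<in>G. u x * f x)"
    using sum_strict_mono_ex1[OF G ge] a(1) by blast
  moreover have "(\<Sum>x\<in>G. u x * c) = c" using u(2) by (simp add: sum_distrib_right[symmetric])
  ultimately show False using avg by simp
qed

lemma lifted_fibre_min:
  fixes G :: "('a::euclidean_space \<times> real) set"
  assumes G: "finite G" and p: "p \<in> convex hull (fst ` G)"
  shows "\<exists>q0\<in>convex hull G. fst q0 = p \<and> (\<forall>q\<in>convex hull G. fst q = p \<longrightarrow> snd q0 \<le> snd q)"
proof -
  define K where "K = convex hull G \<inter> {x. fst x = p}"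
  have "fst ` (convex hull G) = convex hull (fst ` G)"
    using convex_hull_linear_image[OF linear_fst] by metis
  then obtain q where "q \<in> convex hull G" "fst q = p" using p by (metis imageE)
  then have "K \<noteq> {}" unfolding K_def by auto
  moreover have "compact K"
  proof -
    have "compact (convex hull G)" using G by (simp add: compact_convex_hull finite_imp_compact)
    moreover have "closed {x::'a \<times> real. fst x = p}"
      by (intro closed_Collect_eq continuous_intros)
    ultimately show ?thesis unfolding K_def by (rule compact_Int_closed)
  qed
  moreover have "continuous_on K snd" by (intro continuous_intros)
  ultimately obtain q0 where "q0 \<in> K" "\<forall>y\<in>K. snd q0 \<le> snd y"
    using continuous_attains_inf[of K snd] by blast
  then show ?thesis unfolding K_def by auto
qed

text \<open>Lift each
  base B to (indicator of B, excess of B over k1) and pick, over p, a lifted point of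
  least total excess.  If a base above the layer carried positive weight, the
  averaging lemma gives a positively weighted base below the layer, and the exchange
  of these two bases would decrease the excess.\<close>
lemma low_part_of_polytope:
  fixes Bs :: "'n::finite set set"
  assumes M: "matroid_bases UNIV Bs" and B0: "B0 \<in> Bs" and r: "k1 + k2 = card B0"
    and L: "layer_condition Bs E k1 k2"
    and p: "p \<in> convex hull (indic_vec ` Bs)" and below: "indic_vec E \<bullet> p \<le> real k1"
  shows "p \<in> convex hull (indic_vec ` low_bases Bs E k1)"
proof -
  define g where "g = (\<lambda>B. (indic_vec B, real (card (B \<inter> E) - k1)))"
  define G where "G = g ` Bs"
  have G: "finite G" unfolding G_def by simp
  have "fst ` G = indic_vec ` Bs" unfolding G_def g_def by (simp add: image_image)
  then obtain q0 where q0: "q0 \<in> convex hull G" "fst q0 = p"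
    and least: "\<And>q. q \<in> convex hull G \<Longrightarrow> fst q = p \<Longrightarrow> snd q0 \<le> snd q"
    using lifted_fibre_min[OF G] p by metis
  then obtain u where u: "\<forall>x\<in>G. 0 \<le> u x" "sum u G = 1" "(\<Sum>x\<in>G. u x *\<^sub>R x) = q0"
    unfolding convex_hull_finite[OF G] by auto
  have count: "indic_vec E \<bullet> fst (g B) = real (card (B \<inter> E))" for B
    unfolding g_def by (simp add: indic_inner_card)
  have supported_low: "card (B \<inter> E) \<le> k1" if B: "B \<in> Bs" and uB: "0 < u (g B)" for B
  proof (rule ccontr)
    assume high: "\<not> card (B \<inter> E) \<le> k1"
    have "(\<Sum>x\<in>G. u x * (indic_vec E \<bullet> fst x)) = indic_vec E \<bullet> p"
      using q0(2) u(3) by (auto simp: fst_sum inner_sum_right)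
    then have avg: "(\<Sum>x\<in>G. u x * (indic_vec E \<bullet> fst x)) \<le> real k1" using below by simp
    have "g B \<in> G" "real k1 < indic_vec E \<bullet> fst (g B)"
      using B high count unfolding G_def by auto
    then obtain x' where x': "x' \<in> G" "0 < u x'" "indic_vec E \<bullet> fst x' < real k1"
      using weighted_average_below[OF G u(1,2) avg _ uB] by blast
    then obtain B' where B': "B' \<in> Bs" "x' = g B'" "card (B' \<inter> E) < k1"
      using count unfolding G_def by auto
    obtain T S where TS: "T \<subseteq> B - B'" "S \<subseteq> B' - B" "(B - T) \<union> S \<in> Bs" "(B' - S) \<union> T \<in> Bs"
        "card (((B' - S) \<union> T) \<inter> E) \<le> k1" "card (((B - T) \<union> S) \<inter> E) < card (B \<inter> E)"
      using layer_exchange[OF M B0 r L B B'(1)] high B'(3) by auto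
    define D1 where "D1 = (B - T) \<union> S"
    define D2 where "D2 = (B' - S) \<union> T"
    define \<mu> where "\<mu> = min (u (g B)) (u x')"
    have \<mu>: "0 < \<mu>" "\<mu> \<le> u (g B)" "\<mu> \<le> u (g B')" using uB x' B' unfolding \<mu>_def by auto
    define q where "q = q0 - \<mu> *\<^sub>R (g B + g B') + \<mu> *\<^sub>R (g D1 + g D2)"
    have "g B \<noteq> g B'" using high B'(3) unfolding g_def by auto
    moreover have "g B \<in> G" "g B' \<in> G" "g D1 \<in> G" "g D2 \<in> G"
      using B B'(1) TS(3,4) unfolding G_def D1_def D2_def by auto
    ultimately have "q \<in> convex hull G" unfolding q_def u(3)[symmetric]
      using convex_comb_shift[OF G u(1,2)] \<mu> by auto
    moreover have "fst q = p"
      using indic_exchange_sum[OF TS(1,2)] q0(2)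
      unfolding q_def g_def D1_def D2_def by (simp add: algebra_simps)
    ultimately have "snd q0 \<le> snd q" by (rule least)
    moreover have "snd (g B') = 0" "snd (g D2) = 0"
      using B'(3) TS(5) unfolding g_def D2_def by auto
    moreover have "snd (g D1) < snd (g B)"
      using TS(6) high unfolding g_def D1_def by auto
    then have "0 < \<mu> * snd (g B) - \<mu> * snd (g D1)"
      using \<mu>(1) by (simp flip: right_diff_distrib)
    ultimately show False unfolding q_def by (simp add: algebra_simps)
  qed
  have "fst x \<in> indic_vec ` low_bases Bs E k1" if x: "x \<in> G" and ux: "0 < u x" for x
  proof -
    obtain B where "B \<in> Bs" "x = g B" using x unfolding G_def by auto
    then show ?thesis using supported_low ux unfolding g_def low_bases_def by auto
  qed
  then have "(\<Sum>x\<in>G. u x *\<^sub>R fst x) \<in> convex hull (indic_vec ` low_bases Bs E k1)"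
    by (rule convex_comb_support_hull[OF G u(1,2)])
  moreover have "(\<Sum>x\<in>G. u x *\<^sub>R fst x) = p"
    using q0(2) unfolding u(3)[symmetric] fst_sum by simp
  ultimately show ?thesis by simp
qed

text \<open>Every point of the base polytope has r elements in total, split between E and
  its complement; so it lies on the low side of E or on the low side of the
  complement, and the base polytope is the union of the two low polytopes.\<close>
lemma base_polytope_low_halves:
  fixes Bs :: "'n::finite set set"
  assumes M: "matroid_bases UNIV Bs" and B0: "B0 \<in> Bs" and r: "k1 + k2 = card B0"
    and L: "layer_condition Bs E k1 k2"
  shows "convex hull (indic_vec ` Bs) =
    convex hull (indic_vec ` low_bases Bs E k1) \<union> convex hull (indic_vec ` low_bases Bs (- E) k2)"
    (is "?P = ?P1 \<union> ?P2")
proof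
  show "?P1 \<union> ?P2 \<subseteq> ?P" by (intro Un_least hull_mono image_mono) (auto simp: low_bases_def)
next
  have split: "\<And>B. B \<in> Bs \<Longrightarrow> card (B \<inter> E) + card (B \<inter> - E) = card B0"
    using bases_card_eq[OF M _ B0] card_Int_Diff by (metis Diff_eq finite)
  have "?P \<subseteq> {x. (indic_vec E + indic_vec (- E)) \<bullet> x = real (card B0)}"
    using split by (intro hull_minimal convex_hyperplane)
      (auto simp: inner_add_left indic_inner_card simp flip: of_nat_add)
  then have total: "\<And>p. p \<in> ?P \<Longrightarrow> indic_vec E \<bullet> p + indic_vec (- E) \<bullet> p = real (card B0)"
    by (auto simp: inner_add_left)
  show "?P \<subseteq> ?P1 \<union> ?P2"
  proof
    fix p assume p: "p \<in> ?P"
    show "p \<in> ?P1 \<union> ?P2"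
    proof (cases "indic_vec E \<bullet> p \<le> real k1")
      case True
      then show ?thesis using low_part_of_polytope[OF M B0 r L p] by simp
    next
      case False
      then have "indic_vec (- E) \<bullet> p \<le> real k2" using total[OF p] r by simp
      then show ?thesis
        using low_part_of_polytope[OF M B0 _ layer_condition_swap[OF L] p] r by simp
    qed
  qed
qed

theorem layer_condition_split:
  fixes Bs :: "'n::finite set set"
  assumes M: "matroid_bases UNIV Bs" and B0: "B0 \<in> Bs" and r: "k1 + k2 = card B0"
    and L: "layer_condition Bs E k1 k2"
    and Dh: "Dh \<in> Bs" "k1 < card (Dh \<inter> E)" and Dl: "Dl \<in> Bs" "k2 < card (Dl \<inter> - E)"
  shows "has_nontrivial_hyperplane_split Bs"
proof -
  define L1 where "L1 = low_bases Bs E k1"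
  define L2 where "L2 = low_bases Bs (- E) k2"
  have split: "\<And>B. B \<in> Bs \<Longrightarrow> card (B \<inter> E) + card (B \<inter> - E) = card B0"
    using bases_card_eq[OF M _ B0] card_Int_Diff by (metis Diff_eq finite)
  have r': "k2 + k1 = card B0" using r by simp
  have low1: "\<And>B. B \<in> L1 \<longleftrightarrow> B \<in> Bs \<and> k2 \<le> card (B \<inter> - E)"
    and low2: "\<And>B. B \<in> L2 \<longleftrightarrow> B \<in> Bs \<and> k1 \<le> card (B \<inter> E)"
    using split r unfolding L1_def L2_def low_bases_def by fastforce+
  have "Dl \<in> L1" "Dh \<in> L2" using low1 low2 Dl Dh by auto
  then have "matroid_bases UNIV L1" "matroid_bases UNIV L2"
    using low_bases_matroid[OF M B0 r L] low_bases_matroid[OF M B0 r' layer_condition_swap[OF L]]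
    unfolding L1_def L2_def by blast+
  moreover have "base_polytope Bs = base_polytope L1 \<union> base_polytope L2"
    using base_polytope_low_halves[OF M B0 r L] unfolding base_polytope_def L1_def L2_def .
  moreover have "(base_polytope L1 \<inter> base_polytope L2) face_of base_polytope L1"
    unfolding base_polytope_def
    by (rule polytopes_meet_in_face[where E = E and k = k1])
      (use split low1 low2 r in \<open>auto simp: L1_def low_bases_def\<close>)
  moreover have "(base_polytope L2 \<inter> base_polytope L1) face_of base_polytope L2"
    unfolding base_polytope_def
    by (rule polytopes_meet_in_face[where E = "- E" and k = k2])
      (use split low1 low2 r in \<open>auto simp: L2_def low_bases_def\<close>)
  moreover have "base_polytope L1 \<noteq> base_polytope Bs"
  proof
    assume "base_polytope L1 = base_polytope Bs"
    then have "indic_vec E \<bullet> indic_vec Dh \<le> real k1"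
      using Dh(1) count_hull_le[of L1 E k1] unfolding base_polytope_def L1_def low_bases_def
      by (auto intro: hull_inc)
    then show False using Dh(2) by (simp add: indic_inner_card)
  qed
  moreover have "base_polytope L2 \<noteq> base_polytope Bs"
  proof
    assume "base_polytope L2 = base_polytope Bs"
    then have "indic_vec (- E) \<bullet> indic_vec Dl \<le> real k2"
      using Dl(1) count_hull_le[of L2 "- E" k2] unfolding base_polytope_def L2_def low_bases_def
      by (auto intro: hull_inc)
    then show False using Dl(2) by (simp add: indic_inner_card)
  qed
  ultimately show ?thesis
    unfolding has_nontrivial_hyperplane_split_def hyperplane_split_def by (metis Int_commute)
qed

lemma base_above_rank:
  fixes Bs :: "'n::finite set set"
  assumes M: "matroid_bases UNIV Bs" and k: "k < m_rank Bs A"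
  shows "\<exists>B\<in>Bs. k < card (B \<inter> A)"
proof -
  obtain I where I: "m_indep Bs I" "I \<subseteq> A" "card I = m_rank Bs A"
    using rank_attained[OF M] by blast
  then obtain B where B: "B \<in> Bs" "I \<subseteq> B" unfolding m_indep_def by blast
  then have "card I \<le> card (B \<inter> A)" using I by (intro card_mono) auto
  then have "k < card (B \<inter> A)" using I k by linarith
  then show ?thesis using B(1) by blast
qed

text \<open>Independent
  k_i-sets of the relaxation are smaller than the rank, hence independent in M;
  by (P2) their union is independent in M, and it is a base by its size.\<close>
lemma good_partition_relaxation_layer:
  fixes Bs :: "'n::finite set set"
  assumes M: "matroid_bases UNIV Bs" and G: "good_partition UNIV Bs E1 E2"
    and C: "m_circuit UNIV Bs X" and H: "m_hyperplane UNIV Bs X"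
  obtains k1 k2 where "E2 = - E1" "0 < k1" "0 < k2" "k1 + k2 = m_rank Bs UNIV"
    "k1 < m_rank Bs E1" "k2 < m_rank Bs E2" "layer_condition (Bs \<union> {X}) E1 k1 k2"
proof -
  obtain a1 a2 where E12: "E1 \<union> E2 = UNIV" "E1 \<inter> E2 = {}"
    and a: "0 < a1" "a1 < m_rank Bs E1" "0 < a2" "a2 < m_rank Bs E2"
      "m_rank Bs E1 + m_rank Bs E2 = m_rank Bs UNIV + a1 + a2"
    and P2: "\<And>X Y. restr_indep Bs E1 X \<Longrightarrow> card X \<le> m_rank Bs E1 - a1 \<Longrightarrow>
      restr_indep Bs E2 Y \<Longrightarrow> card Y \<le> m_rank Bs E2 - a2 \<Longrightarrow> m_indep Bs (X \<union> Y)"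
    using G unfolding good_partition_def by blast
  define k1 where "k1 = m_rank Bs E1 - a1"
  define k2 where "k2 = m_rank Bs E2 - a2"
  have E2: "E2 = - E1" using E12 by auto
  obtain B0 where B0: "B0 \<in> Bs" using M unfolding matroid_bases_def by auto
  have k: "0 < k1" "0 < k2" "k1 + k2 = card B0"
    using a rank_UNIV[OF M B0] unfolding k1_def k2_def by auto
  have "layer_condition (Bs \<union> {X}) E1 k1 k2"
    unfolding layer_condition_def
  proof (intro allI impI)
    fix X0 Y0
    assume XY: "m_indep (Bs \<union> {X}) X0 \<and> X0 \<subseteq> E1 \<and> card X0 = k1 \<and>
      m_indep (Bs \<union> {X}) Y0 \<and> Y0 \<subseteq> - E1 \<and> card Y0 = k2"
    then have "m_indep Bs X0" "m_indep Bs Y0"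
      using relaxation_small_indep[OF M B0 _ C H] k by auto
    then have "m_indep Bs (X0 \<union> Y0)"
      using P2[of X0 Y0] XY E2 unfolding restr_indep_def k1_def k2_def by auto
    moreover have "card (X0 \<union> Y0) = card B0" using XY k by (subst card_Un_disjoint) auto
    ultimately show "X0 \<union> Y0 \<in> Bs \<union> {X}" using indep_card_base[OF M _ B0] by blast
  qed
  moreover have "k1 < m_rank Bs E1" "k2 < m_rank Bs E2" using a unfolding k1_def k2_def by auto
  ultimately show ?thesis using that[of k1 k2] E2 k rank_UNIV[OF M B0] by simp
qed

theorem corollary2:
  fixes \<B> \<B>' :: "'n::finite set set" and E1 E2 :: "'n set"
  assumes "matroid_bases UNIV \<B>"
    and "good_partition UNIV \<B> E1 E2"
    and "is_relaxation UNIV \<B> \<B>'"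
  shows "has_nontrivial_hyperplane_split \<B>'"
proof -
  note M = assms(1)
  obtain X where C: "m_circuit UNIV \<B> X" and H: "m_hyperplane UNIV \<B> X"
    and relax: "\<B>' = \<B> \<union> {X}"
    using assms(3) unfolding is_relaxation_def by blast
  obtain k1 k2 where E2: "E2 = - E1" and k: "0 < k1" "0 < k2" "k1 + k2 = m_rank \<B> UNIV"
    and hi: "k1 < m_rank \<B> E1" "k2 < m_rank \<B> E2" and L: "layer_condition \<B>' E1 k1 k2"
    using good_partition_relaxation_layer[OF M assms(2) C H] relax by metis
  obtain B0 where B0: "B0 \<in> \<B>" using M unfolding matroid_bases_def by auto
  have r: "k1 + k2 = card B0" using k rank_UNIV[OF M B0] by simp
  have M': "matroid_bases UNIV \<B>'"
    unfolding relax using relaxation_matroid[OF M B0 _ C H] r k by simp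
  obtain Dh Dl where "Dh \<in> \<B>" "k1 < card (Dh \<inter> E1)" "Dl \<in> \<B>" "k2 < card (Dl \<inter> - E1)"
    using base_above_rank[OF M hi(1)] base_above_rank[OF M hi(2)] E2 by blast
  then show ?thesis
    using layer_condition_split[OF M' _ r L, of Dh Dl] B0 relax by blast
qed

end
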